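(* Let $B>0$ and let $D_0$ be the outer disk bounded by the circle centered at $(0,0)$ of radius $1/B$ (so $D_0$ has curvature $-B$). Let $A$ be an inner disk of curvature $A>0$ tangent to $D_0$ (lying inside the circle), and let $$\mathbf a=\begin{bmatrix}m\\ n\end{bmatrix}=\mathrm{spin}(A,D_0).$$ Then $A=B+m^2+n^2$, the radius of $A$ is $1/A$, and its center is $$\left(\frac{m^2-n^2}{B(B+m^2+n^2)},\ \frac{2mn}{B(B+m^2+n^2)}\right).$$ Equivalently, in terms of the disk symbol (reduced center coordinates over curvature), $A$ is $\dfrac{(m^2-n^2)/B,\ 2mn/B}{m^2+n^2+B}$.
   Context: An inner disk of radius $r$ has curvature $1/r$ and signed radius $r$; the outer disk (exterior) of a circle of radius $r$ has curvature $-1/r$ and signed radius $-r$. Identify the plane with $\mathbb C$. For tangent disks $X,Y$ with centers $c_X,c_Y$ and signed radii $r_X,r_Y$, the tangency spinor is $\mathrm{spin}(X,Y)=\pm\sqrt{(c_Y-c_X)/(r_Xr_Y)}\in\mathbb C$, regarded as a vector in $\mathbb R^2$ (defined up to sign). The symbol of a disk of curvature $\beta$ centered at $(x,y)$ is $\frac{\dot x,\dot y}{\beta}$ with $\dot x=\beta x$, $\dot y=\beta y$. *)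

theory Defs
  imports Complex_Main
begin

text \<open>A disk is represented by its center (a complex number) and its signed radius:
  positive for an inner disk (closed ball), negative for an outer disk
  (exterior of the circle).\<close>

definition curvature :: "real \<Rightarrow> real" where
  "curvature r = 1 / r"

text \<open>Tangency spinor of tangent disks X, Y: the square roots (the spinor is
  defined only up to sign) of (c_Y - c_X)/(r_X r_Y).\<close>
definition spin :: "complex \<Rightarrow> real \<Rightarrow> complex \<Rightarrow> real \<Rightarrow> complex set" where
  "spin cX rX cY rY = {z. z ^ 2 = (cY - cX) / complex_of_real (rX * rY)}"

text \<open>An inner disk (center cX, radius rX > 0) lies inside the circle of
  radius R centered at cY and is tangent to it (internal tangency), i.e.
  it is tangent to the outer disk of signed radius -R.\<close>
definition inner_tangent_to_outer :: "complex \<Rightarrow> real \<Rightarrow> complex \<Rightarrow> real \<Rightarrow> bool" where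
  "inner_tangent_to_outer cX rX cY R \<longleftrightarrow> 0 < rX \<and> rX \<le> R \<and> cmod (cY - cX) = R - rX"

end

theory Submission
  imports Defs
begin

text \<open>The spinor squares to the center of A divided by the product of the radii, so A's
  center is a real multiple of the complex square of the spinor; taking norms and using
  internal tangency (the center lies at distance R - r from the origin) gives the curvature
  of A as B plus the squared norm of the spinor.\<close>

lemma spin_outer_disk_at_origin_iff:
  assumes "r * R \<noteq> 0"
  shows "z \<in> spin c r 0 (- R) \<longleftrightarrow> c = complex_of_real (r * R) * z\<^sup>2"
  using assms by (auto simp: spin_def field_simps)

lemma curvature_eq_outer_curvature_plus_spin_norm:
  assumes "0 < R" "inner_tangent_to_outer c r 0 R" "z \<in> spin c r 0 (- R)"
  shows "1 / r = 1 / R + (cmod z)\<^sup>2"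
proof -
  have "0 < r" and dist: "cmod c = R - r"
    using assms(2) by (auto simp: inner_tangent_to_outer_def)
  with assms have "c = complex_of_real (r * R) * z\<^sup>2"
    by (simp add: spin_outer_disk_at_origin_iff)
  then have "R - r = r * R * (cmod z)\<^sup>2"
    using \<open>0 < r\<close> \<open>0 < R\<close> dist by (simp add: norm_mult norm_power)
  with \<open>0 < r\<close> \<open>0 < R\<close> show ?thesis
    by (simp add: field_simps)
qed

theorem propositionA1:
  fixes B \<alpha> :: real and c z :: complex
  assumes "B > 0" and "\<alpha> > 0"
    and "inner_tangent_to_outer c (1 / \<alpha>) 0 (1 / B)"
    and "z \<in> spin c (1 / \<alpha>) 0 (- (1 / B))"
  shows "\<alpha> = B + (Re z)\<^sup>2 + (Im z)\<^sup>2
    \<and> curvature (1 / \<alpha>) = \<alpha>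
    \<and> c = Complex (((Re z)\<^sup>2 - (Im z)\<^sup>2) / (B * (B + (Re z)\<^sup>2 + (Im z)\<^sup>2)))
                  (2 * Re z * Im z / (B * (B + (Re z)\<^sup>2 + (Im z)\<^sup>2)))"
proof -
  have curv: "\<alpha> = B + (Re z)\<^sup>2 + (Im z)\<^sup>2"
    using curvature_eq_outer_curvature_plus_spin_norm [OF _ assms(3,4)] assms(1)
    by (simp add: cmod_power2)
  have "c = complex_of_real (1 / (B * \<alpha>)) * z\<^sup>2"
    using assms(1,2,4) by (simp add: spin_outer_disk_at_origin_iff mult.commute)
  then have "c = Complex (((Re z)\<^sup>2 - (Im z)\<^sup>2) / (B * \<alpha>)) (2 * Re z * Im z / (B * \<alpha>))"
    by (simp add: complex_eq_iff Re_power2 Im_power2)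
  with curv assms(2) show ?thesis
    by (simp add: curvature_def)
qed

end
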